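(* If $S\subseteq\mathbb{N}^d$ is a quasi-irreducible GNS, then $\tau(S)\le t(S)\le 2\tau(S)$.
   Context: $\mathbb{N}=\{0,1,2,\dots\}$. A GNS is a submonoid $S\subseteq\mathbb{N}^d$ with finite complement $\mathcal{H}(S)=\mathbb{N}^d\setminus S$ (gaps). A relaxed monomial order is a total order $\prec$ on $\mathbb{N}^d$ with (i) $v\prec w\Rightarrow v\prec w+u$ for all $u\in\mathbb{N}^d$, (ii) $0\prec v$ for all $v\neq0$. A gap is Frobenius allowable if it equals $\max_\prec\mathcal{H}(S)$ for some relaxed monomial order; $FA(S)$ is their set and $\tau(S)=|FA(S)|$. A gap $P$ is pseudo-Frobenius if $P+s\in S$ for all nonzero $s\in S$; $PF(S)$ is their set and $t(S)=|PF(S)|$. $S$ is quasi-irreducible if for every $x\in\mathcal{H}(S)$, either $2x\in FA(S)$ or there is $F\in FA(S)$ with $F-x\in S$. *)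

theory Defs
  imports Main
begin

text \<open>Elements of N^d are represented as functions nat => nat vanishing outside {0..<d}.\<close>

definition nvec :: "nat \<Rightarrow> (nat \<Rightarrow> nat) set" where
  "nvec d = {v. \<forall>i\<ge>d. v i = 0}"

definition vadd :: "(nat \<Rightarrow> nat) \<Rightarrow> (nat \<Rightarrow> nat) \<Rightarrow> (nat \<Rightarrow> nat)" where
  "vadd u v = (\<lambda>i. u i + v i)"

definition vzero :: "nat \<Rightarrow> nat" where
  "vzero = (\<lambda>i. 0)"

definition is_GNS :: "nat \<Rightarrow> (nat \<Rightarrow> nat) set \<Rightarrow> bool" where
  "is_GNS d S \<longleftrightarrow> S \<subseteq> nvec d \<and> vzero \<in> S \<and>
     (\<forall>u\<in>S. \<forall>v\<in>S. vadd u v \<in> S) \<and> finite (nvec d - S)"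

definition gaps :: "nat \<Rightarrow> (nat \<Rightarrow> nat) set \<Rightarrow> (nat \<Rightarrow> nat) set" where
  "gaps d S = nvec d - S"

definition relaxed_monomial_order ::
  "nat \<Rightarrow> ((nat \<Rightarrow> nat) \<Rightarrow> (nat \<Rightarrow> nat) \<Rightarrow> bool) \<Rightarrow> bool" where
  "relaxed_monomial_order d lt \<longleftrightarrow>
     (\<forall>v\<in>nvec d. \<not> lt v v) \<and>
     (\<forall>u\<in>nvec d. \<forall>v\<in>nvec d. \<forall>w\<in>nvec d. lt u v \<longrightarrow> lt v w \<longrightarrow> lt u w) \<and>
     (\<forall>v\<in>nvec d. \<forall>w\<in>nvec d. v \<noteq> w \<longrightarrow> lt v w \<or> lt w v) \<and>
     (\<forall>u\<in>nvec d. \<forall>v\<in>nvec d. \<forall>w\<in>nvec d. lt v w \<longrightarrow> lt v (vadd w u)) \<and>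
     (\<forall>v\<in>nvec d. v \<noteq> vzero \<longrightarrow> lt vzero v)"

definition is_max_wrt ::
  "((nat \<Rightarrow> nat) \<Rightarrow> (nat \<Rightarrow> nat) \<Rightarrow> bool) \<Rightarrow> (nat \<Rightarrow> nat) set \<Rightarrow> (nat \<Rightarrow> nat) \<Rightarrow> bool" where
  "is_max_wrt lt H F \<longleftrightarrow> F \<in> H \<and> (\<forall>h\<in>H. h \<noteq> F \<longrightarrow> lt h F)"

definition FA :: "nat \<Rightarrow> (nat \<Rightarrow> nat) set \<Rightarrow> (nat \<Rightarrow> nat) set" where
  "FA d S = {F \<in> gaps d S. \<exists>lt. relaxed_monomial_order d lt \<and> is_max_wrt lt (gaps d S) F}"

definition tau :: "nat \<Rightarrow> (nat \<Rightarrow> nat) set \<Rightarrow> nat" where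
  "tau d S = card (FA d S)"

definition PF :: "nat \<Rightarrow> (nat \<Rightarrow> nat) set \<Rightarrow> (nat \<Rightarrow> nat) set" where
  "PF d S = {P \<in> gaps d S. \<forall>s\<in>S. s \<noteq> vzero \<longrightarrow> vadd P s \<in> S}"

definition type_t :: "nat \<Rightarrow> (nat \<Rightarrow> nat) set \<Rightarrow> nat" where
  "type_t d S = card (PF d S)"

text \<open>F - x \<in> S (in N^d) is expressed as: F = x + s for some s \<in> S.\<close>
definition quasi_irreducible :: "nat \<Rightarrow> (nat \<Rightarrow> nat) set \<Rightarrow> bool" where
  "quasi_irreducible d S \<longleftrightarrow>
     (\<forall>x\<in>gaps d S. vadd x x \<in> FA d S \<or> (\<exists>F\<in>FA d S. \<exists>s\<in>S. vadd x s = F))"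

end

theory Submission
  imports Defs
begin

(* Every Frobenius allowable gap F is pseudo-Frobenius: for nonzero s in S the
   element F + s lies above F in any relaxed monomial order, so it cannot be a gap.
   Conversely, if P is pseudo-Frobenius, quasi-irreducibility gives either 2P in FA(S),
   or P + s = F in FA(S) with s in S; in the second case s = 0 because P + s is a gap.
   Hence PF(S) is covered by FA(S) and the preimage of FA(S) under the injective
   doubling map, so t(S) is at most 2 tau(S). *)

lemma finite_gaps: "is_GNS d S \<Longrightarrow> finite (gaps d S)"
  by (simp add: is_GNS_def gaps_def)

lemma finite_FA: "is_GNS d S \<Longrightarrow> finite (FA d S)"
  by (rule rev_finite_subset[OF finite_gaps]) (auto simp: FA_def)

lemma finite_PF: "is_GNS d S \<Longrightarrow> finite (PF d S)"
  by (rule rev_finite_subset[OF finite_gaps]) (auto simp: PF_def)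

lemma vadd_nvec: "u \<in> nvec d \<Longrightarrow> v \<in> nvec d \<Longrightarrow> vadd u v \<in> nvec d"
  by (simp add: nvec_def vadd_def)

lemma vadd_vzero [simp]: "vadd v vzero = v"
  by (simp add: vadd_def vzero_def)

lemma vadd_eq_self_iff [simp]: "vadd v s = v \<longleftrightarrow> s = vzero"
  by (auto simp: vadd_def vzero_def fun_eq_iff)

lemma inj_on_vadd_self: "inj_on (\<lambda>v. vadd v v) A"
  by (rule inj_onI) (simp add: vadd_def fun_eq_iff flip: mult_2)

lemma relaxed_monomial_order_lt_vadd:
  assumes "relaxed_monomial_order d lt" "v \<in> nvec d" "s \<in> nvec d" "s \<noteq> vzero"
  shows "lt v (vadd v s)"
proof -
  have irrefl: "\<And>w. w \<in> nvec d \<Longrightarrow> \<not> lt w w"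
    and total: "\<And>v w. v \<in> nvec d \<Longrightarrow> w \<in> nvec d \<Longrightarrow> v \<noteq> w \<Longrightarrow> lt v w \<or> lt w v"
    and mono: "\<And>u v w. u \<in> nvec d \<Longrightarrow> v \<in> nvec d \<Longrightarrow> w \<in> nvec d \<Longrightarrow> lt v w \<Longrightarrow> lt v (vadd w u)"
    using assms(1) unfolding relaxed_monomial_order_def by blast+
  have vs: "vadd v s \<in> nvec d" using assms(2,3) by (rule vadd_nvec)
  have "\<not> lt (vadd v s) v"
    using mono[OF assms(3) vs assms(2)] irrefl[OF vs] by blast
  moreover have "vadd v s \<noteq> v" using assms(4) by simp
  ultimately show ?thesis using total[OF assms(2) vs] by metis
qed

lemma FA_subset_PF:
  assumes "is_GNS d S"
  shows "FA d S \<subseteq> PF d S"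
proof
  fix F assume "F \<in> FA d S"
  then obtain lt where lt: "relaxed_monomial_order d lt" and F_max: "is_max_wrt lt (gaps d S) F"
    and F_gap: "F \<in> gaps d S"
    by (auto simp: FA_def)
  have F_nvec: "F \<in> nvec d" using F_gap by (simp add: gaps_def)
  have "vadd F s \<in> S" if "s \<in> S" "s \<noteq> vzero" for s
  proof (rule ccontr)
    assume "vadd F s \<notin> S"
    have s_nvec: "s \<in> nvec d" using \<open>s \<in> S\<close> assms by (auto simp: is_GNS_def)
    then have "vadd F s \<in> gaps d S"
      using F_nvec \<open>vadd F s \<notin> S\<close> by (simp add: gaps_def vadd_nvec)
    then have "lt (vadd F s) F"
      using F_max \<open>s \<noteq> vzero\<close> by (simp add: is_max_wrt_def)
    moreover have "lt F (vadd F s)"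
      using relaxed_monomial_order_lt_vadd[OF lt F_nvec s_nvec that(2)] .
    ultimately have "lt F F"
      using lt F_nvec s_nvec vadd_nvec[OF F_nvec s_nvec]
      unfolding relaxed_monomial_order_def by blast
    then show False using lt F_nvec unfolding relaxed_monomial_order_def by blast
  qed
  then show "F \<in> PF d S" using F_gap by (simp add: PF_def)
qed

lemma PF_vadd_gap_imp_vzero:
  "P \<in> PF d S \<Longrightarrow> s \<in> S \<Longrightarrow> vadd P s \<notin> S \<Longrightarrow> s = vzero"
  by (auto simp: PF_def)

lemma PF_subset_FA_Un_halves:
  assumes "quasi_irreducible d S"
  shows "PF d S \<subseteq> FA d S \<union> {P \<in> PF d S. vadd P P \<in> FA d S}"
proof
  fix P assume P: "P \<in> PF d S"
  show "P \<in> FA d S \<union> {P \<in> PF d S. vadd P P \<in> FA d S}"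
  proof (cases "vadd P P \<in> FA d S")
    case True
    then show ?thesis using P by simp
  next
    case False
    then obtain F s where "F \<in> FA d S" "s \<in> S" "vadd P s = F"
      using assms P by (auto simp: quasi_irreducible_def PF_def)
    moreover have "F \<notin> S" using \<open>F \<in> FA d S\<close> by (simp add: FA_def gaps_def)
    ultimately have "P = F" using PF_vadd_gap_imp_vzero[OF P] by fastforce
    then show ?thesis using \<open>F \<in> FA d S\<close> by simp
  qed
qed

lemma card_halves_le:
  assumes "finite B"
  shows "card {P \<in> A. vadd P P \<in> B} \<le> card B"
  by (rule card_inj_on_le[OF inj_on_vadd_self _ assms]) auto

theorem corollary3p4:
  fixes d :: nat and S :: "(nat \<Rightarrow> nat) set"
  assumes "is_GNS d S" and "quasi_irreducible d S"
  shows "tau d S \<le> type_t d S \<and> type_t d S \<le> 2 * tau d S"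
proof
  show "tau d S \<le> type_t d S"
    unfolding tau_def type_t_def
    using FA_subset_PF[OF assms(1)] finite_PF[OF assms(1)] by (rule card_mono[rotated])
  let ?halves = "{P \<in> PF d S. vadd P P \<in> FA d S}"
  have "card (PF d S) \<le> card (FA d S \<union> ?halves)"
    using PF_subset_FA_Un_halves[OF assms(2)] finite_FA[OF assms(1)] finite_PF[OF assms(1)]
    by (intro card_mono) auto
  also have "\<dots> \<le> card (FA d S) + card ?halves" by (rule card_Un_le)
  also have "\<dots> \<le> 2 * card (FA d S)"
    using card_halves_le[OF finite_FA[OF assms(1)]] by simp
  finally show "type_t d S \<le> 2 * tau d S" unfolding tau_def type_t_def .
qed

end
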